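(* Let $A$ be a von Neumann algebra acting on a Hilbert space $\mathcal H$, and let $\psi\in\mathcal H$ be a unit vector with associated rank-one projection $P_\psi=|\psi\rangle\langle\psi|$. Define $\mu^0_\psi:\mathcal O\Sigma_\ast\to\{\text{functions }\mathcal V(A)\to[0,1]\}$ by $\mu^0_\psi(U)(C)=1$ if for every $C'\in\mathcal V(A)$ with $C\subseteq C'$ and $P_\psi\in C'$ one has $X^{C'}_{P_\psi}\subseteq U_{C'}$, and $\mu^0_\psi(U)(C)=0$ otherwise. Then each $\mu^0_\psi(U)$ is order-preserving, and for all $C\in\mathcal V(A)$: (1) $U\subseteq V$ implies $\mu^0_\psi(U)(C)\le\mu^0_\psi(V)(C)$; (3) $\mu^0_\psi(U)(C)+\mu^0_\psi(V)(C)=\mu^0_\psi(U\cap V)(C)+\mu^0_\psi(U\cup V)(C)$ for all $U,V\in\mathcal O\Sigma_\ast$; (4) for every directed family $\{U_i\}_{i\in I}\subseteq\mathcal O\Sigma_\ast$, $\mu^0_\psi(\bigcup_iU_i)(C)=\sup_i\mu^0_\psi(U_i)(C)$.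
   Context: $\mathcal V(A)$ is the poset (under inclusion) of abelian von Neumann subalgebras of $A$ containing the unit. For $C\in\mathcal V(A)$, $\Sigma_C$ is its Gelfand spectrum; for $b\in C_{sa}$, $X^C_b=\{\lambda\in\Sigma_C\mid\lambda(b)>0\}$. Let $\Sigma=\{(C,\lambda)\mid C\in\mathcal V(A),\lambda\in\Sigma_C\}$ and $U_C=\{\lambda\mid (C,\lambda)\in U\}$. The space $\Sigma_\ast$ is $\Sigma$ with the topology $\mathcal O\Sigma_\ast$ in which $U$ is open iff (1) each $U_C$ is open in $\Sigma_C$, and (2) if $\lambda\in U_C$, $C\subseteq C'$ and $\lambda'\in\Sigma_{C'}$ with $\lambda'|_C=\lambda$, then $\lambda'\in U_{C'}$. A function $\mathcal V(A)\to[0,1]$ is order-preserving if $C\subseteq C'$ implies $f(C)\le f(C')$. *)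

theory Defs
  imports "HOL-Analysis.Analysis"
begin

text \<open>A complex Hilbert space is given on a carrier type 'h (an abelian group)
  by a complex scalar multiplication sc and an inner product ip,
  conjugate-linear in the first and linear in the second argument.\<close>

definition hnorm :: "('h \<Rightarrow> 'h \<Rightarrow> complex) \<Rightarrow> 'h \<Rightarrow> real" where
  "hnorm ip x = sqrt (Re (ip x x))"

definition hilbert_space ::
  "(complex \<Rightarrow> 'h::ab_group_add \<Rightarrow> 'h) \<Rightarrow> ('h \<Rightarrow> 'h \<Rightarrow> complex) \<Rightarrow> bool" where
  "hilbert_space sc ip \<longleftrightarrow>
     vector_space sc \<and>
     (\<forall>x y z. ip x (y + z) = ip x y + ip x z) \<and>
     (\<forall>x y c. ip x (sc c y) = c * ip x y) \<and>
     (\<forall>x y. ip y x = cnj (ip x y)) \<and>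
     (\<forall>x. Im (ip x x) = 0 \<and> Re (ip x x) \<ge> 0) \<and>
     (\<forall>x. ip x x = 0 \<longrightarrow> x = 0) \<and>
     (\<forall>X::nat \<Rightarrow> 'h. (\<forall>e>0. \<exists>N. \<forall>m\<ge>N. \<forall>n\<ge>N. hnorm ip (X m - X n) < e) \<longrightarrow>
        (\<exists>L. (\<lambda>n. hnorm ip (X n - L)) \<longlonglongrightarrow> 0))"

definition bounded_op ::
  "(complex \<Rightarrow> 'h::ab_group_add \<Rightarrow> 'h) \<Rightarrow> ('h \<Rightarrow> 'h \<Rightarrow> complex) \<Rightarrow> ('h \<Rightarrow> 'h) \<Rightarrow> bool" where
  "bounded_op sc ip T \<longleftrightarrow>
     (\<forall>x y. T (x + y) = T x + T y) \<and> (\<forall>c x. T (sc c x) = sc c (T x)) \<and>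
     (\<exists>K. \<forall>x. hnorm ip (T x) \<le> K * hnorm ip x)"

definition commutant ::
  "(complex \<Rightarrow> 'h::ab_group_add \<Rightarrow> 'h) \<Rightarrow> ('h \<Rightarrow> 'h \<Rightarrow> complex) \<Rightarrow> ('h \<Rightarrow> 'h) set \<Rightarrow> ('h \<Rightarrow> 'h) set" where
  "commutant sc ip S = {T. bounded_op sc ip T \<and> (\<forall>R\<in>S. T \<circ> R = R \<circ> T)}"

definition von_neumann_algebra ::
  "(complex \<Rightarrow> 'h::ab_group_add \<Rightarrow> 'h) \<Rightarrow> ('h \<Rightarrow> 'h \<Rightarrow> complex) \<Rightarrow> ('h \<Rightarrow> 'h) set \<Rightarrow> bool" where
  "von_neumann_algebra sc ip A \<longleftrightarrow>
     (\<forall>T\<in>A. bounded_op sc ip T) \<and>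
     (\<forall>T\<in>A. \<exists>S\<in>A. \<forall>x y. ip (T x) y = ip x (S y)) \<and>
     commutant sc ip (commutant sc ip A) = A"

definition abelian_subalgebras ::
  "(complex \<Rightarrow> 'h::ab_group_add \<Rightarrow> 'h) \<Rightarrow> ('h \<Rightarrow> 'h \<Rightarrow> complex) \<Rightarrow> ('h \<Rightarrow> 'h) set \<Rightarrow> ('h \<Rightarrow> 'h) set set" where
  "abelian_subalgebras sc ip A =
     {C. C \<subseteq> A \<and> von_neumann_algebra sc ip C \<and> id \<in> C \<and> (\<forall>a\<in>C. \<forall>b\<in>C. a \<circ> b = b \<circ> a)}"

text \<open>Gelfand spectrum of C: nonzero multiplicative linear functionals on C
  (characters), represented extensionally (value 0 outside C).\<close>
definition gelfand_spectrum ::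
  "(complex \<Rightarrow> 'h::ab_group_add \<Rightarrow> 'h) \<Rightarrow> ('h \<Rightarrow> 'h) set \<Rightarrow> (('h \<Rightarrow> 'h) \<Rightarrow> complex) set" where
  "gelfand_spectrum sc C =
     {l. (\<forall>a. a \<notin> C \<longrightarrow> l a = 0) \<and>
         (\<forall>a\<in>C. \<forall>b\<in>C. l (\<lambda>x. a x + b x) = l a + l b) \<and>
         (\<forall>a\<in>C. \<forall>c. l (\<lambda>x. sc c (a x)) = c * l a) \<and>
         (\<forall>a\<in>C. \<forall>b\<in>C. l (a \<circ> b) = l a * l b) \<and>
         (\<exists>a\<in>C. l a \<noteq> 0)}"

definition gelfand_topology ::
  "(complex \<Rightarrow> 'h::ab_group_add \<Rightarrow> 'h) \<Rightarrow> ('h \<Rightarrow> 'h) set \<Rightarrow> (('h \<Rightarrow> 'h) \<Rightarrow> complex) topology" where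
  "gelfand_topology sc C =
     topology_generated_by {{l \<in> gelfand_spectrum sc C. l a \<in> W} | a W. a \<in> C \<and> open W}"

definition Xset ::
  "(complex \<Rightarrow> 'h::ab_group_add \<Rightarrow> 'h) \<Rightarrow> ('h \<Rightarrow> 'h) set \<Rightarrow> ('h \<Rightarrow> 'h) \<Rightarrow> (('h \<Rightarrow> 'h) \<Rightarrow> complex) set" where
  "Xset sc C b = {l \<in> gelfand_spectrum sc C. Im (l b) = 0 \<and> Re (l b) > 0}"

text \<open>The spectral presheaf as a set of pairs (C, \<lambda>).\<close>
definition Sigma_tot ::
  "(complex \<Rightarrow> 'h::ab_group_add \<Rightarrow> 'h) \<Rightarrow> ('h \<Rightarrow> 'h \<Rightarrow> complex) \<Rightarrow> ('h \<Rightarrow> 'h) set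
     \<Rightarrow> (('h \<Rightarrow> 'h) set \<times> (('h \<Rightarrow> 'h) \<Rightarrow> complex)) set" where
  "Sigma_tot sc ip A = {(C, l). C \<in> abelian_subalgebras sc ip A \<and> l \<in> gelfand_spectrum sc C}"

definition fiber :: "('c \<times> 'l) set \<Rightarrow> 'c \<Rightarrow> 'l set" where
  "fiber U C = {l. (C, l) \<in> U}"

definition restrict_char :: "('o \<Rightarrow> complex) \<Rightarrow> 'o set \<Rightarrow> 'o \<Rightarrow> complex" where
  "restrict_char l C = (\<lambda>a. if a \<in> C then l a else 0)"

definition opens_star ::
  "(complex \<Rightarrow> 'h::ab_group_add \<Rightarrow> 'h) \<Rightarrow> ('h \<Rightarrow> 'h \<Rightarrow> complex) \<Rightarrow> ('h \<Rightarrow> 'h) set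
     \<Rightarrow> (('h \<Rightarrow> 'h) set \<times> (('h \<Rightarrow> 'h) \<Rightarrow> complex)) set set" where
  "opens_star sc ip A =
     {U. U \<subseteq> Sigma_tot sc ip A \<and>
         (\<forall>C\<in>abelian_subalgebras sc ip A. openin (gelfand_topology sc C) (fiber U C)) \<and>
         (\<forall>C\<in>abelian_subalgebras sc ip A. \<forall>C'\<in>abelian_subalgebras sc ip A.
            \<forall>l\<in>fiber U C. \<forall>l'\<in>gelfand_spectrum sc C'.
              C \<subseteq> C' \<and> restrict_char l' C = l \<longrightarrow> l' \<in> fiber U C')}"

definition rank_one_proj ::
  "(complex \<Rightarrow> 'h \<Rightarrow> 'h) \<Rightarrow> ('h \<Rightarrow> 'h \<Rightarrow> complex) \<Rightarrow> 'h \<Rightarrow> ('h \<Rightarrow> 'h)" where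
  "rank_one_proj sc ip \<psi> = (\<lambda>x. sc (ip \<psi> x) \<psi>)"

definition mu0 ::
  "(complex \<Rightarrow> 'h::ab_group_add \<Rightarrow> 'h) \<Rightarrow> ('h \<Rightarrow> 'h \<Rightarrow> complex) \<Rightarrow> ('h \<Rightarrow> 'h) set \<Rightarrow> 'h
     \<Rightarrow> (('h \<Rightarrow> 'h) set \<times> (('h \<Rightarrow> 'h) \<Rightarrow> complex)) set \<Rightarrow> ('h \<Rightarrow> 'h) set \<Rightarrow> real" where
  "mu0 sc ip A \<psi> U C =
     (if \<forall>C'\<in>abelian_subalgebras sc ip A. C \<subseteq> C' \<and> rank_one_proj sc ip \<psi> \<in> C' \<longrightarrow>
            Xset sc C' (rank_one_proj sc ip \<psi>) \<subseteq> fiber U C'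
      then 1 else 0)"

end

theory Submission imports Defs begin

(*
  Write P = |psi><psi|.  A character l of an abelian von Neumann algebra C
  with l(P) > 0 satisfies l(P) = 1 and is then forced to be the vector state
  a |-> <psi, a psi>; so X^C_P has at most one point, and restricting it to a smaller
  algebra containing P gives the point of the smaller X.  Fix C in V(A) and let K be the
  set of C' >= C containing P with X^{C'}_P nonempty.  Either K is empty, and then
  mu0(U)(C) = 1 for every U, or C0 = Inter K again lies in V(A) and, writing l0 for the
  unique point of X^{C0}_P, upward closure of opens gives, for every open U,
  mu0(U)(C) = 1  iff  l0 in U_{C0}.
  In both cases mu0(-)(C) is a point mass, which yields modularity and preservation of
  (nonempty) unions at once; monotonicity in U and in C is immediate from the definition.
*)

section \<open>Elementary Hilbert-space algebra\<close>

lemma hilbert_space_laws: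
  assumes "hilbert_space sc ip"
  shows "vector_space sc"
    and "\<forall>x y z. ip x (y + z) = ip x y + ip x z"
    and "\<forall>x y c. ip x (sc c y) = c * ip x y"
    and "\<forall>x y. ip y x = cnj (ip x y)"
    and "\<forall>x. Re (ip x x) \<ge> 0"
    and "\<forall>x. ip x x = 0 \<longrightarrow> x = 0"
  using assms unfolding hilbert_space_def by meson+

context
  fixes sc :: "complex \<Rightarrow> 'h::ab_group_add \<Rightarrow> 'h" and ip :: "'h \<Rightarrow> 'h \<Rightarrow> complex"
  assumes H: "hilbert_space sc ip"
begin

lemma sc_scale: "sc a (sc b x) = sc (a * b) x"
  using vector_space.vector_space_assms(3)[OF hilbert_space_laws(1)[OF H]] .

lemma sc_add: "sc a (x + y) = sc a x + sc a y"
  using vector_space.vector_space_assms(1)[OF hilbert_space_laws(1)[OF H]] .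

lemma ip_add_r: "ip x (y + z) = ip x y + ip x z"
  using hilbert_space_laws(2)[OF H] by blast

lemma ip_sc_r: "ip x (sc c y) = c * ip x y"
  using hilbert_space_laws(3)[OF H] by blast

lemma ip_cnj: "ip y x = cnj (ip x y)"
  using hilbert_space_laws(4)[OF H] by blast

lemma ip_nonneg: "Re (ip x x) \<ge> 0"
  using hilbert_space_laws(5)[OF H] by blast

lemma ip_definite: "ip x x = 0 \<Longrightarrow> x = 0"
  using hilbert_space_laws(6)[OF H] by blast

lemma ip_add_l: "ip (y + z) x = ip y x + ip z x"
proof -
  have "ip (y + z) x = cnj (ip x (y + z))" by (rule ip_cnj)
  also have "\<dots> = cnj (ip x y) + cnj (ip x z)" by (simp add: ip_add_r)
  also have "\<dots> = ip y x + ip z x" by (simp add: ip_cnj[of y x] ip_cnj[of z x])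
  finally show ?thesis .
qed

lemma ip_diff_r: "ip x (y - z) = ip x y - ip x z"
  using ip_add_r[of x "y - z" z] by (simp add: algebra_simps)

lemma ip_diff_l: "ip (y - z) x = ip y x - ip z x"
  using ip_add_l[of "y - z" z x] by (simp add: algebra_simps)

lemma ip_sc_l: "ip (sc c y) x = cnj c * ip y x"
proof -
  have "ip (sc c y) x = cnj (ip x (sc c y))" by (rule ip_cnj)
  also have "\<dots> = cnj c * cnj (ip x y)" by (simp add: ip_sc_r)
  also have "\<dots> = cnj c * ip y x" by (simp add: ip_cnj[of y x])
  finally show ?thesis .
qed

text \<open>The parallelogram law gives a (crude) triangle inequality for the norm, which is all
  that is needed to see that sums of bounded operators are bounded.\<close>

lemma parallelogram_bound: "Re (ip (u + v) (u + v)) \<le> 2 * (Re (ip u u) + Re (ip v v))"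
proof -
  have "ip (u + v) (u + v) + ip (u - v) (u - v) = 2 * (ip u u + ip v v)"
    by (simp add: ip_add_l ip_add_r ip_diff_l ip_diff_r algebra_simps)
  hence "Re (ip (u + v) (u + v)) + Re (ip (u - v) (u - v)) = 2 * (Re (ip u u) + Re (ip v v))"
    by (metis plus_complex.sel(1) mult_2)
  thus ?thesis using ip_nonneg[of "u - v"] by linarith
qed

lemma hnorm_nonneg: "hnorm ip x \<ge> 0"
  by (simp add: hnorm_def ip_nonneg)

lemma hnorm_add_bound: "hnorm ip (u + v) \<le> 2 * (hnorm ip u + hnorm ip v)"
proof -
  define a b where "a = Re (ip u u)" and "b = Re (ip v v)"
  have ab: "a \<ge> 0" "b \<ge> 0" using ip_nonneg a_def b_def by auto
  have "Re (ip (u + v) (u + v)) \<le> 2 * (a + b)"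
    using parallelogram_bound[of u v] unfolding a_def b_def .
  also have "\<dots> \<le> 4 * (a + b + 2 * (sqrt a * sqrt b))" using ab by simp
  also have "\<dots> = (2 * (sqrt a + sqrt b))\<^sup>2" using ab by (simp add: power_mult_distrib power2_sum)
  finally show ?thesis unfolding hnorm_def a_def b_def
    by (intro real_le_lsqrt) (auto simp: ip_nonneg)
qed

lemma hnorm_sc: "hnorm ip (sc c u) = cmod c * hnorm ip u"
proof -
  have "ip (sc c u) (sc c u) = (c * cnj c) * ip u u"
    by (simp add: ip_sc_l ip_sc_r algebra_simps)
  also have "\<dots> = of_real ((cmod c)\<^sup>2) * ip u u"
    using complex_norm_square[of c] by metis
  finally have "Re (ip (sc c u) (sc c u)) = (cmod c)\<^sup>2 * Re (ip u u)" by simp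
  thus ?thesis unfolding hnorm_def by (simp add: real_sqrt_mult)
qed

lemma bounded_op_nonneg_bound:
  assumes "bounded_op sc ip T"
  obtains K where "K \<ge> 0" "\<And>x. hnorm ip (T x) \<le> K * hnorm ip x"
proof -
  obtain K where K: "\<And>x. hnorm ip (T x) \<le> K * hnorm ip x"
    using assms unfolding bounded_op_def by blast
  have "hnorm ip (T x) \<le> max K 0 * hnorm ip x" for x
    using K[of x] hnorm_nonneg[of x] by (smt (verit) mult_right_mono)
  moreover have "max K 0 \<ge> 0" by simp
  ultimately show ?thesis using that by blast
qed

lemma bounded_add:
  assumes "bounded_op sc ip a" "bounded_op sc ip b"
  shows "bounded_op sc ip (\<lambda>x. a x + b x)"
proof -
  obtain Ka where Ka: "\<And>x. hnorm ip (a x) \<le> Ka * hnorm ip x"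
    using assms(1) unfolding bounded_op_def by blast
  obtain Kb where Kb: "\<And>x. hnorm ip (b x) \<le> Kb * hnorm ip x"
    using assms(2) unfolding bounded_op_def by blast
  have "hnorm ip (a x + b x) \<le> (2 * (Ka + Kb)) * hnorm ip x" for x
    using hnorm_add_bound[of "a x" "b x"] Ka[of x] Kb[of x] by (simp add: algebra_simps)
  moreover have "a (x + y) + b (x + y) = (a x + b x) + (a y + b y)" for x y
    using assms unfolding bounded_op_def by (simp add: algebra_simps)
  moreover have "a (sc c x) + b (sc c x) = sc c (a x + b x)" for c x
    using assms unfolding bounded_op_def by (simp add: sc_add)
  ultimately show ?thesis unfolding bounded_op_def by blast
qed

lemma bounded_sc:
  assumes "bounded_op sc ip a"
  shows "bounded_op sc ip (\<lambda>x. sc c (a x))"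
proof -
  obtain Ka where "Ka \<ge> 0" and Ka: "\<And>x. hnorm ip (a x) \<le> Ka * hnorm ip x"
    using bounded_op_nonneg_bound[OF assms] by blast
  have "hnorm ip (sc c (a x)) \<le> (cmod c * Ka) * hnorm ip x" for x
    using Ka[of x] by (simp add: hnorm_sc mult.assoc mult_left_mono)
  moreover have "sc c (a (x + y)) = sc c (a x) + sc c (a y)" for x y
    using assms unfolding bounded_op_def by (simp add: sc_add)
  moreover have "sc c (a (sc d x)) = sc d (sc c (a x))" for d x
    using assms unfolding bounded_op_def by (simp add: sc_scale mult.commute)
  ultimately show ?thesis unfolding bounded_op_def by blast
qed

lemma bounded_comp:
  assumes "bounded_op sc ip a" "bounded_op sc ip b"
  shows "bounded_op sc ip (a \<circ> b)"
proof -
  obtain Ka where "Ka \<ge> 0" and Ka: "\<And>x. hnorm ip (a x) \<le> Ka * hnorm ip x"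
    using bounded_op_nonneg_bound[OF assms(1)] by blast
  obtain Kb where Kb: "\<And>x. hnorm ip (b x) \<le> Kb * hnorm ip x"
    using assms(2) unfolding bounded_op_def by blast
  have "hnorm ip (a (b x)) \<le> (Ka * Kb) * hnorm ip x" for x
    using order_trans[OF Ka[of "b x"] mult_left_mono[OF Kb[of x] \<open>Ka \<ge> 0\<close>]]
    by (simp add: mult.assoc)
  moreover have "(a \<circ> b) (x + y) = (a \<circ> b) x + (a \<circ> b) y" for x y
    using assms unfolding bounded_op_def by simp
  moreover have "(a \<circ> b) (sc c x) = sc c ((a \<circ> b) x)" for c x
    using assms unfolding bounded_op_def by simp
  ultimately show ?thesis unfolding bounded_op_def by auto
qed

text \<open>Adjoints are unique, since the inner product is definite.\<close>

lemma adjoint_unique: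
  assumes "\<forall>x y. ip (T x) y = ip x (S1 y)" "\<forall>x y. ip (T x) y = ip x (S2 y)"
  shows "S1 = S2"
proof
  fix y
  have "ip (S1 y - S2 y) (S1 y - S2 y) = 0"
    using assms by (simp add: ip_diff_r)
  thus "S1 y = S2 y" using ip_definite by fastforce
qed

section \<open>Von Neumann algebras\<close>

lemma vn_bicommutant_mem:
  assumes "von_neumann_algebra sc ip C" "bounded_op sc ip f"
    and "\<And>R. R \<in> commutant sc ip C \<Longrightarrow> f \<circ> R = R \<circ> f"
  shows "f \<in> C"
proof -
  have "f \<in> commutant sc ip (commutant sc ip C)"
    using assms(2,3) unfolding commutant_def by auto
  thus ?thesis using assms(1) unfolding von_neumann_algebra_def by simp
qed

lemma vn_bounded: "von_neumann_algebra sc ip C \<Longrightarrow> a \<in> C \<Longrightarrow> bounded_op sc ip a"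
  unfolding von_neumann_algebra_def by blast

lemma commutant_commutes: "R \<in> commutant sc ip C \<Longrightarrow> a \<in> C \<Longrightarrow> R (a x) = a (R x)"
  unfolding commutant_def by (auto simp: fun_eq_iff)

lemma commutant_linear:
  assumes "R \<in> commutant sc ip C"
  shows "R (x + y) = R x + R y" "R (sc c x) = sc c (R x)"
  using assms unfolding commutant_def bounded_op_def by blast+

lemma vn_add:
  assumes C: "von_neumann_algebra sc ip C" and "a \<in> C" "b \<in> C"
  shows "(\<lambda>x. a x + b x) \<in> C"
proof (rule vn_bicommutant_mem[OF C])
  show "bounded_op sc ip (\<lambda>x. a x + b x)"
    using bounded_add vn_bounded[OF C] assms(2,3) by blast
  fix R assume R: "R \<in> commutant sc ip C"
  show "(\<lambda>x. a x + b x) \<circ> R = R \<circ> (\<lambda>x. a x + b x)"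
    using commutant_commutes[OF R assms(2)] commutant_commutes[OF R assms(3)]
    by (simp add: fun_eq_iff commutant_linear[OF R])
qed

lemma vn_sc:
  assumes C: "von_neumann_algebra sc ip C" and "a \<in> C"
  shows "(\<lambda>x. sc c (a x)) \<in> C"
proof (rule vn_bicommutant_mem[OF C])
  show "bounded_op sc ip (\<lambda>x. sc c (a x))"
    using bounded_sc vn_bounded[OF C] assms(2) by blast
  fix R assume R: "R \<in> commutant sc ip C"
  show "(\<lambda>x. sc c (a x)) \<circ> R = R \<circ> (\<lambda>x. sc c (a x))"
    using commutant_commutes[OF R assms(2)] by (simp add: fun_eq_iff commutant_linear[OF R])
qed

lemma vn_comp:
  assumes C: "von_neumann_algebra sc ip C" and "a \<in> C" "b \<in> C"
  shows "a \<circ> b \<in> C"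
proof (rule vn_bicommutant_mem[OF C])
  show "bounded_op sc ip (a \<circ> b)"
    using bounded_comp vn_bounded[OF C] assms(2,3) by blast
  fix R assume R: "R \<in> commutant sc ip C"
  show "(a \<circ> b) \<circ> R = R \<circ> (a \<circ> b)"
    using commutant_commutes[OF R assms(2)] commutant_commutes[OF R assms(3)]
    by (simp add: fun_eq_iff)
qed

text \<open>The adjoint of an element of the intersection lies in every member of the family
  because adjoints are unique; the bicommutant property follows from antitonicity of the
  commutant.\<close>

lemma Inter_abelian_subalgebras:
  assumes K: "\<K> \<subseteq> abelian_subalgebras sc ip A" "\<K> \<noteq> {}"
  shows "\<Inter>\<K> \<in> abelian_subalgebras sc ip A"
proof -
  obtain K0 where K0: "K0 \<in> \<K>" using K by blast
  have KV: "K \<subseteq> A" "von_neumann_algebra sc ip K" "id \<in> K" "\<forall>a\<in>K. \<forall>b\<in>K. a \<circ> b = b \<circ> a"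
    if "K \<in> \<K>" for K
    using K that unfolding abelian_subalgebras_def by blast+
  have bounded: "\<forall>T\<in>\<Inter>\<K>. bounded_op sc ip T" using KV(2) K0 vn_bounded by blast
  have adjoint: "\<exists>S\<in>\<Inter>\<K>. \<forall>x y. ip (T x) y = ip x (S y)" if T: "T \<in> \<Inter>\<K>" for T
  proof -
    have "\<exists>S\<in>K. \<forall>x y. ip (T x) y = ip x (S y)" if "K \<in> \<K>" for K
      using KV(2)[OF that] T that unfolding von_neumann_algebra_def by blast
    then obtain S where S: "S \<in> K0" "\<forall>x y. ip (T x) y = ip x (S y)" using K0 by blast
    have "S \<in> K" if "K \<in> \<K>" for K
      using \<open>\<And>K. K \<in> \<K> \<Longrightarrow> \<exists>S\<in>K. _\<close>[OF that] adjoint_unique[OF S(2)] by metis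
    thus ?thesis using S by blast
  qed
  have "commutant sc ip (commutant sc ip (\<Inter>\<K>)) \<subseteq> K" if "K \<in> \<K>" for K
  proof -
    have "commutant sc ip (commutant sc ip (\<Inter>\<K>)) \<subseteq> commutant sc ip (commutant sc ip K)"
      using that unfolding commutant_def by blast
    thus ?thesis using KV(2)[OF that] unfolding von_neumann_algebra_def by simp
  qed
  moreover have "\<Inter>\<K> \<subseteq> commutant sc ip (commutant sc ip (\<Inter>\<K>))"
    using bounded unfolding commutant_def by auto
  ultimately have "commutant sc ip (commutant sc ip (\<Inter>\<K>)) = \<Inter>\<K>" by blast
  hence "von_neumann_algebra sc ip (\<Inter>\<K>)"
    using bounded adjoint unfolding von_neumann_algebra_def by blast
  thus ?thesis using KV K0 unfolding abelian_subalgebras_def by blast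
qed

text \<open>Restricting a character of C1 to a von Neumann subalgebra C0 on which it does not vanish
  identically gives a character of C0; closure of C0 under the algebra operations is what
  makes the restricted functional additive, homogeneous and multiplicative.\<close>

lemma restrict_char_spectrum:
  assumes C0: "von_neumann_algebra sc ip C0" and sub: "C0 \<subseteq> C1"
    and l: "l \<in> gelfand_spectrum sc C1" and "a0 \<in> C0" "l a0 \<noteq> 0"
  shows "restrict_char l C0 \<in> gelfand_spectrum sc C0"
proof -
  have add: "l (\<lambda>x. a x + b x) = l a + l b"
    and mult: "l (a \<circ> b) = l a * l b"
    and scale: "l (\<lambda>x. sc c (a x)) = c * l a" if "a \<in> C0" "b \<in> C0" for a b c
    using l sub that unfolding gelfand_spectrum_def by blast+
  show ?thesis
    unfolding gelfand_spectrum_def mem_Collect_eq restrict_char_def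
    using assms(4,5) add mult scale vn_add[OF C0] vn_comp[OF C0] vn_sc[OF C0] by auto
qed

section \<open>Characters that are positive on a rank-one projection\<close>

context
  fixes \<psi> :: 'h
  assumes unit: "ip \<psi> \<psi> = 1"
begin

abbreviation proj :: "'h \<Rightarrow> 'h" where "proj \<equiv> rank_one_proj sc ip \<psi>"

lemma proj_idem: "proj \<circ> proj = proj"
  unfolding rank_one_proj_def by (auto simp: fun_eq_iff ip_sc_r unit sc_scale)

lemma Xset_proj_mem: "l \<in> Xset sc C proj \<Longrightarrow> proj \<in> C"
  unfolding Xset_def gelfand_spectrum_def by force

text \<open>Since P is idempotent, l(P) is a nonzero idempotent complex number, hence 1.\<close>

lemma Xset_proj_value:
  assumes l: "l \<in> Xset sc C proj"
  shows "l proj = 1"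
proof -
  have "l proj = l (proj \<circ> proj)" by (simp add: proj_idem)
  also have "\<dots> = l proj * l proj"
    using l Xset_proj_mem[OF l] unfolding Xset_def gelfand_spectrum_def by blast
  finally have "l proj = l proj * l proj" .
  moreover have "l proj \<noteq> 0" using l unfolding Xset_def by auto
  ultimately show ?thesis by simp
qed

text \<open>Such a character is the vector state of psi: from P a P = <psi, a psi> P one gets
  l(a) = l(P) l(a) l(P) = <psi, a psi> l(P) = <psi, a psi>.\<close>

lemma Xset_proj_vector_state:
  assumes C: "von_neumann_algebra sc ip C" and l: "l \<in> Xset sc C proj" and a: "a \<in> C"
  shows "l a = ip \<psi> (a \<psi>)"
proof -
  have PC: "proj \<in> C" using Xset_proj_mem[OF l] .
  have g: "l \<in> gelfand_spectrum sc C" using l unfolding Xset_def by simp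
  have lmult: "l (b \<circ> b') = l b * l b'" if "b \<in> C" "b' \<in> C" for b b'
    using g that unfolding gelfand_spectrum_def by blast
  have lscale: "l (\<lambda>x. sc c (b x)) = c * l b" if "b \<in> C" for b c
    using g that unfolding gelfand_spectrum_def by blast
  have a_hom: "a (sc k v) = sc k (a v)" for k v
    using vn_bounded[OF C a] unfolding bounded_op_def by blast
  have sandwich: "proj \<circ> (a \<circ> proj) = (\<lambda>x. sc (ip \<psi> (a \<psi>)) (proj x))"
    unfolding rank_one_proj_def by (simp add: fun_eq_iff a_hom ip_sc_r sc_scale mult.commute)
  have "l a = l proj * (l a * l proj)" using Xset_proj_value[OF l] by simp
  also have "\<dots> = l (proj \<circ> (a \<circ> proj))" using lmult PC a vn_comp[OF C a PC] by simp
  also have "\<dots> = ip \<psi> (a \<psi>) * l proj" unfolding sandwich using lscale[OF PC] .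
  finally show ?thesis using Xset_proj_value[OF l] by simp
qed

lemma Xset_proj_unique:
  assumes "von_neumann_algebra sc ip C" "l \<in> Xset sc C proj" "l' \<in> Xset sc C proj"
  shows "l = l'"
proof
  fix a
  show "l a = l' a"
  proof (cases "a \<in> C")
    case True
    show ?thesis
      using Xset_proj_vector_state[OF assms(1,2) True] Xset_proj_vector_state[OF assms(1,3) True]
      by simp
  next
    case False
    thus ?thesis using assms(2,3) unfolding Xset_def gelfand_spectrum_def by simp
  qed
qed

lemma Xset_proj_restrict:
  assumes "von_neumann_algebra sc ip C0" "C0 \<subseteq> C1" "proj \<in> C0" and l: "l \<in> Xset sc C1 proj"
  shows "restrict_char l C0 \<in> Xset sc C0 proj"
proof -
  have "l proj = 1" using Xset_proj_value[OF l] .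
  moreover have "l \<in> gelfand_spectrum sc C1" using l unfolding Xset_def by simp
  ultimately have "restrict_char l C0 \<in> gelfand_spectrum sc C0"
    using restrict_char_spectrum assms(1-3) by simp
  thus ?thesis using \<open>l proj = 1\<close> assms(3) unfolding Xset_def restrict_char_def by simp
qed

end

end

section \<open>mu0 is a point mass\<close>

definition state_in_above ::
  "(complex \<Rightarrow> 'h::ab_group_add \<Rightarrow> 'h) \<Rightarrow> ('h \<Rightarrow> 'h \<Rightarrow> complex) \<Rightarrow> ('h \<Rightarrow> 'h) set \<Rightarrow> 'h
     \<Rightarrow> (('h \<Rightarrow> 'h) set \<times> (('h \<Rightarrow> 'h) \<Rightarrow> complex)) set \<Rightarrow> ('h \<Rightarrow> 'h) set \<Rightarrow> bool" where
  "state_in_above sc ip A \<psi> W C \<longleftrightarrow>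
     (\<forall>C'\<in>abelian_subalgebras sc ip A. C \<subseteq> C' \<and> rank_one_proj sc ip \<psi> \<in> C' \<longrightarrow>
        Xset sc C' (rank_one_proj sc ip \<psi>) \<subseteq> fiber W C')"

lemma mu0_indicator:
  "mu0 sc ip A \<psi> W C = (if state_in_above sc ip A \<psi> W C then 1 else 0)"
  unfolding mu0_def state_in_above_def by simp

text \<open>Either the condition holds for every W, or there is a single
  point l0 of Sigma (over C0, the intersection of all relevant algebras above C) such that
  the condition holds for an open W exactly when l0 lies in W.  The backward direction uses
  that every relevant point restricts to l0 and that open sets are upward closed.\<close>

lemma state_in_above_point_mass:
  assumes H: "hilbert_space sc ip" and unit: "ip \<psi> \<psi> = 1"
    and CV: "C \<in> abelian_subalgebras sc ip A"
  obtains "\<And>W. state_in_above sc ip A \<psi> W C"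
  | C0 l0 where "\<And>W. state_in_above sc ip A \<psi> W C \<Longrightarrow> l0 \<in> fiber W C0"
      and "\<And>W. W \<in> opens_star sc ip A \<Longrightarrow> l0 \<in> fiber W C0 \<Longrightarrow> state_in_above sc ip A \<psi> W C"
proof -
  let ?P = "rank_one_proj sc ip \<psi>"
  define K where "K = {C'\<in>abelian_subalgebras sc ip A. C \<subseteq> C' \<and> ?P \<in> C' \<and> Xset sc C' ?P \<noteq> {}}"
  have vn: "von_neumann_algebra sc ip C'" if "C' \<in> abelian_subalgebras sc ip A" for C'
    using that unfolding abelian_subalgebras_def by blast
  show ?thesis
  proof (cases "K = {}")
    case True
    hence "state_in_above sc ip A \<psi> W C" for W unfolding state_in_above_def K_def by blast
    thus ?thesis using that(1) by blast
  next
    case False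
    define C0 where "C0 = \<Inter>K"
    have C0V: "C0 \<in> abelian_subalgebras sc ip A"
      unfolding C0_def using Inter_abelian_subalgebras[OF H, of K A] False K_def by blast
    have C0_above: "C \<subseteq> C0" "?P \<in> C0" unfolding C0_def K_def by auto
    obtain C1 l1 where C1: "C1 \<in> K" "l1 \<in> Xset sc C1 ?P" using False K_def by blast
    define l0 where "l0 = restrict_char l1 C0"
    have l0X: "l0 \<in> Xset sc C0 ?P"
      unfolding l0_def using Xset_proj_restrict[OF H unit vn[OF C0V] _ C0_above(2) C1(2)] C1(1)
      by (simp add: C0_def Inter_lower)
    have "l0 \<in> fiber W C0" if "state_in_above sc ip A \<psi> W C" for W
      using that l0X C0V C0_above unfolding state_in_above_def by blast
    moreover have "state_in_above sc ip A \<psi> W C"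
      if W: "W \<in> opens_star sc ip A" and l0W: "l0 \<in> fiber W C0" for W
      unfolding state_in_above_def
    proof (intro ballI impI subsetI)
      fix C' l assume C'V: "C' \<in> abelian_subalgebras sc ip A" and "C \<subseteq> C' \<and> ?P \<in> C'"
        and l: "l \<in> Xset sc C' ?P"
      hence "C' \<in> K" unfolding K_def by blast
      hence sub: "C0 \<subseteq> C'" unfolding C0_def by blast
      have "restrict_char l C0 \<in> Xset sc C0 ?P"
        using Xset_proj_restrict[OF H unit vn[OF C0V] sub C0_above(2) l] .
      hence "restrict_char l C0 = l0"
        using Xset_proj_unique[OF H unit vn[OF C0V] _ l0X] by blast
      moreover have "l \<in> gelfand_spectrum sc C'" using l unfolding Xset_def by simp
      ultimately show "l \<in> fiber W C'"
        using W C0V C'V l0W sub unfolding opens_star_def by blast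
    qed
    ultimately show ?thesis using that(2) by blast
  qed
qed

lemma state_in_above_mono_open:
  "W \<subseteq> W' \<Longrightarrow> state_in_above sc ip A \<psi> W C \<Longrightarrow> state_in_above sc ip A \<psi> W' C"
  unfolding state_in_above_def fiber_def by blast

lemma state_in_above_mono_algebra:
  "C \<subseteq> C' \<Longrightarrow> state_in_above sc ip A \<psi> W C \<Longrightarrow> state_in_above sc ip A \<psi> W C'"
  unfolding state_in_above_def by blast

lemma state_in_above_Int:
  "state_in_above sc ip A \<psi> (U \<inter> V) C \<longleftrightarrow>
     state_in_above sc ip A \<psi> U C \<and> state_in_above sc ip A \<psi> V C"
  unfolding state_in_above_def fiber_def by blast

text \<open>Being a point mass, the condition commutes with nonempty unions of open sets.\<close>

lemma state_in_above_Union: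
  assumes H: "hilbert_space sc ip" and unit: "ip \<psi> \<psi> = 1"
    and CV: "C \<in> abelian_subalgebras sc ip A"
    and "I \<noteq> {}" and opens: "\<And>i. i \<in> I \<Longrightarrow> Us i \<in> opens_star sc ip A"
  shows "state_in_above sc ip A \<psi> (\<Union>i\<in>I. Us i) C \<longleftrightarrow>
           (\<exists>i\<in>I. state_in_above sc ip A \<psi> (Us i) C)"
proof
  assume union: "state_in_above sc ip A \<psi> (\<Union>i\<in>I. Us i) C"
  from state_in_above_point_mass[OF H unit CV]
  show "\<exists>i\<in>I. state_in_above sc ip A \<psi> (Us i) C"
  proof cases
    case 1
    thus ?thesis using \<open>I \<noteq> {}\<close> by blast
  next
    case (2 C0 l0)
    from 2(1)[OF union] obtain i where "i \<in> I" "l0 \<in> fiber (Us i) C0"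
      unfolding fiber_def by blast
    thus ?thesis using 2(2) opens by blast
  qed
next
  assume "\<exists>i\<in>I. state_in_above sc ip A \<psi> (Us i) C"
  thus "state_in_above sc ip A \<psi> (\<Union>i\<in>I. Us i) C"
    using state_in_above_mono_open[of _ "\<Union>i\<in>I. Us i"] by blast
qed

lemma mu0_mono_algebra: "C \<subseteq> C' \<Longrightarrow> mu0 sc ip A \<psi> U C \<le> mu0 sc ip A \<psi> U C'"
  unfolding mu0_indicator using state_in_above_mono_algebra[of C C' sc ip A \<psi> U] by simp

lemma mu0_mono_open: "U \<subseteq> V \<Longrightarrow> mu0 sc ip A \<psi> U C \<le> mu0 sc ip A \<psi> V C"
  unfolding mu0_indicator using state_in_above_mono_open[of U V sc ip A \<psi> C] by simp

lemma mu0_modular: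
  assumes "hilbert_space sc ip" "ip \<psi> \<psi> = 1" "C \<in> abelian_subalgebras sc ip A"
    and "U \<in> opens_star sc ip A" "V \<in> opens_star sc ip A"
  shows "mu0 sc ip A \<psi> U C + mu0 sc ip A \<psi> V C
           = mu0 sc ip A \<psi> (U \<inter> V) C + mu0 sc ip A \<psi> (U \<union> V) C"
proof -
  have "state_in_above sc ip A \<psi> (\<Union>W\<in>{U, V}. id W) C \<longleftrightarrow>
          (\<exists>W\<in>{U, V}. state_in_above sc ip A \<psi> (id W) C)"
    by (rule state_in_above_Union[OF assms(1-3)]) (use assms(4,5) in auto)
  hence "state_in_above sc ip A \<psi> (U \<union> V) C \<longleftrightarrow>
           state_in_above sc ip A \<psi> U C \<or> state_in_above sc ip A \<psi> V C"
    by simp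
  thus ?thesis by (simp add: mu0_indicator state_in_above_Int)
qed

lemma SUP_indicator:
  fixes Q :: "'i \<Rightarrow> bool"
  assumes "I \<noteq> {}"
  shows "(SUP i\<in>I. if Q i then 1 else 0 :: real) = (if \<exists>i\<in>I. Q i then 1 else 0)"
proof (cases "\<exists>i\<in>I. Q i")
  case True
  then obtain j where j: "j \<in> I" "Q j" by blast
  have bdd: "bdd_above ((\<lambda>i. if Q i then 1 else 0 :: real) ` I)"
    by (intro bdd_aboveI[of _ 1]) auto
  have "1 = (if Q j then 1 else 0 :: real)" using j(2) by simp
  also have "\<dots> \<le> (SUP i\<in>I. if Q i then 1 else 0 :: real)" by (rule cSUP_upper[OF j(1) bdd])
  finally have "1 \<le> (SUP i\<in>I. if Q i then 1 else 0 :: real)" .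
  moreover have "(SUP i\<in>I. if Q i then 1 else 0 :: real) \<le> 1"
    using assms by (intro cSUP_least) auto
  ultimately show ?thesis using True by simp
next
  case False
  hence "(SUP i\<in>I. if Q i then 1 else 0 :: real) = (SUP i\<in>I. 0)" by (intro SUP_cong) auto
  thus ?thesis using False assms by simp
qed

lemma mu0_Union:
  assumes "hilbert_space sc ip" "ip \<psi> \<psi> = 1" "C \<in> abelian_subalgebras sc ip A"
    and "I \<noteq> {}" "\<And>i. i \<in> I \<Longrightarrow> Us i \<in> opens_star sc ip A"
  shows "mu0 sc ip A \<psi> (\<Union>i\<in>I. Us i) C = (SUP i\<in>I. mu0 sc ip A \<psi> (Us i) C)"
proof -
  have "mu0 sc ip A \<psi> (\<Union>i\<in>I. Us i) C
          = (if \<exists>i\<in>I. state_in_above sc ip A \<psi> (Us i) C then 1 else 0)"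
    using state_in_above_Union[OF assms] by (simp add: mu0_indicator)
  also have "\<dots> = (SUP i\<in>I. if state_in_above sc ip A \<psi> (Us i) C then 1 else 0)"
    by (rule SUP_indicator[OF assms(4), symmetric])
  also have "\<dots> = (SUP i\<in>I. mu0 sc ip A \<psi> (Us i) C)"
    unfolding mu0_indicator ..
  finally show ?thesis .
qed

text \<open>Proposition 4.10: mu0 takes values in [0,1], is order-preserving on V(A), monotone and
  modular in the open set, and preserves directed suprema (in fact all nonempty ones).\<close>

theorem proposition4p10:
  fixes sc :: "complex \<Rightarrow> 'h::ab_group_add \<Rightarrow> 'h"
    and ip :: "'h \<Rightarrow> 'h \<Rightarrow> complex"
    and A :: "('h \<Rightarrow> 'h) set"
    and \<psi> :: 'h
  assumes "hilbert_space sc ip"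
    and "von_neumann_algebra sc ip A"
    and "ip \<psi> \<psi> = 1"
  shows "(\<forall>U\<in>opens_star sc ip A.
            (\<forall>C\<in>abelian_subalgebras sc ip A. 0 \<le> mu0 sc ip A \<psi> U C \<and> mu0 sc ip A \<psi> U C \<le> 1) \<and>
            (\<forall>C\<in>abelian_subalgebras sc ip A. \<forall>C'\<in>abelian_subalgebras sc ip A.
               C \<subseteq> C' \<longrightarrow> mu0 sc ip A \<psi> U C \<le> mu0 sc ip A \<psi> U C'))
       \<and> (\<forall>C\<in>abelian_subalgebras sc ip A.
            (\<forall>U\<in>opens_star sc ip A. \<forall>V\<in>opens_star sc ip A.
               U \<subseteq> V \<longrightarrow> mu0 sc ip A \<psi> U C \<le> mu0 sc ip A \<psi> V C)
          \<and> (\<forall>U\<in>opens_star sc ip A. \<forall>V\<in>opens_star sc ip A.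
               mu0 sc ip A \<psi> U C + mu0 sc ip A \<psi> V C
                 = mu0 sc ip A \<psi> (U \<inter> V) C + mu0 sc ip A \<psi> (U \<union> V) C)
          \<and> (\<forall>(I::'i set) (Us::'i \<Rightarrow> _).
               I \<noteq> {} \<and> (\<forall>i\<in>I. Us i \<in> opens_star sc ip A) \<and>
               (\<forall>i\<in>I. \<forall>j\<in>I. \<exists>k\<in>I. Us i \<subseteq> Us k \<and> Us j \<subseteq> Us k) \<longrightarrow>
               mu0 sc ip A \<psi> (\<Union>i\<in>I. Us i) C = (SUP i\<in>I. mu0 sc ip A \<psi> (Us i) C)))"
proof (intro conjI ballI impI allI)
  fix U C
  show "0 \<le> mu0 sc ip A \<psi> U C" "mu0 sc ip A \<psi> U C \<le> 1"
    by (simp_all add: mu0_indicator)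
next
  fix U and C C' :: "('h \<Rightarrow> 'h) set"
  show "C \<subseteq> C' \<Longrightarrow> mu0 sc ip A \<psi> U C \<le> mu0 sc ip A \<psi> U C'"
    by (rule mu0_mono_algebra)
next
  fix C and U V :: "(('h \<Rightarrow> 'h) set \<times> (('h \<Rightarrow> 'h) \<Rightarrow> complex)) set"
  show "U \<subseteq> V \<Longrightarrow> mu0 sc ip A \<psi> U C \<le> mu0 sc ip A \<psi> V C"
    by (rule mu0_mono_open)
next
  fix C U V
  assume "C \<in> abelian_subalgebras sc ip A" "U \<in> opens_star sc ip A" "V \<in> opens_star sc ip A"
  thus "mu0 sc ip A \<psi> U C + mu0 sc ip A \<psi> V C
          = mu0 sc ip A \<psi> (U \<inter> V) C + mu0 sc ip A \<psi> (U \<union> V) C"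
    by (rule mu0_modular[OF assms(1,3)])
next
  fix C and I :: "'i set" and Us
  assume "C \<in> abelian_subalgebras sc ip A"
    and "I \<noteq> {} \<and> (\<forall>i\<in>I. Us i \<in> opens_star sc ip A) \<and>
         (\<forall>i\<in>I. \<forall>j\<in>I. \<exists>k\<in>I. Us i \<subseteq> Us k \<and> Us j \<subseteq> Us k)"
  thus "mu0 sc ip A \<psi> (\<Union>i\<in>I. Us i) C = (SUP i\<in>I. mu0 sc ip A \<psi> (Us i) C)"
    by (intro mu0_Union[OF assms(1,3)]) simp_all
qed

end
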